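(* Let $N\ge1$ and $k>0$ with $\#\mathcal O^\times\mid k$. If $D_K=4$, $D_K=8$, or $D_K\equiv3\pmod 4$ is prime, then $J^{\rm spez}_{k,1}(N)=J_{k,1}(N)$.
   Context: $K$ is an imaginary quadratic field of class number one with discriminant $-D_K$, ring of integers $\mathcal O$, $N(a)=a\bar a$, $\mathcal D^{-1}=\mathcal O/\sqrt{-D_K}$, $e[z]=e^{2\pi iz}$. $J_{k,1}(N)$ is the space of Hermitian Jacobi forms of weight $k$, index $1$ and level $N$: holomorphic $\varphi:\mathbf H\times\mathbf C^2\to\mathbf C$ such that (a) for all $\epsilon\in\mathcal O^\times$ and $\begin{pmatrix}a&b\\ c&d\end{pmatrix}\in\Gamma_0(N)$: $(c\tau+d)^{-k}e[-\frac{czw}{c\tau+d}]\varphi(\frac{a\tau+b}{c\tau+d},\frac{\epsilon z}{c\tau+d},\frac{\bar\epsilon w}{c\tau+d})=\varphi(\tau,z,w)$; (b) for all $\lambda,\mu\in\mathcal O$: $e[N(\lambda)\tau+\bar\lambda z+\lambda w]\varphi(\tau,z+\lambda\tau+\mu,w+\bar\lambda\tau+\bar\mu)=\varphi(\tau,z,w)$; (c) for each $M\in\mathrm{SL}_2(\mathbf Z)$ the transform of $\varphi$ by $M$ as in (a) (with $\epsilon=1$) has an expansion $\sum_{\ell\ge0,t\in\mathcal D^{-1},\nu N(t)\le\ell}c^M(\ell,t)e[\frac\ell\nu\tau+\bar tz+tw]$ with $\nu\in\mathbf Z_{>0}$, $\nu=1$ for $M=I_2$; $c_\varphi(\ell,t):=c^{I_2}(\ell,t)$.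 $J^{\rm spez}_{k,1}(N)$ is the subspace of $\varphi$ whose coefficients $c_\varphi(\ell,t)$ depend only on $\ell-N(t)$. *)

theory Defs
  imports "HOL-Analysis.Analysis"
begin

text \<open>The imaginary quadratic field K of discriminant -D (D = D_K > 0) is realised inside
  the complex numbers.\<close>

definition eC :: "complex \<Rightarrow> complex" where
  "eC x = exp (2 * of_real pi * \<i> * x)"

definition sqrtmD :: "nat \<Rightarrow> complex" where
  "sqrtmD D = \<i> * complex_of_real (sqrt (real D))"

definition omegaK :: "nat \<Rightarrow> complex" where
  "omegaK D = (- of_nat D + sqrtmD D) / 2"

definition OK :: "nat \<Rightarrow> complex set" where
  "OK D = {of_int x + of_int y * omegaK D | x y. True}"

definition Dinv :: "nat \<Rightarrow> complex set" where
  "Dinv D = {a / sqrtmD D | a. a \<in> OK D}"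

definition unitsK :: "nat \<Rightarrow> complex set" where
  "unitsK D = {e \<in> OK D. \<exists>f \<in> OK D. e * f = 1}"

definition Nm :: "complex \<Rightarrow> real" where
  "Nm a = Re (a * cnj a)"

definition holo3 :: "(complex \<Rightarrow> complex \<Rightarrow> complex \<Rightarrow> complex) \<Rightarrow> bool" where
  "holo3 \<phi> \<longleftrightarrow> (\<forall>\<tau> z w. Im \<tau> > 0 \<longrightarrow>
     (\<exists>\<alpha> \<beta> \<gamma>. ((\<lambda>(a, b, c). \<phi> a b c) has_derivative
        (\<lambda>(u, v, s). \<alpha> * u + \<beta> * v + \<gamma> * s)) (at (\<tau>, z, w))))"

text \<open>Transform of phi by M = (a b; c d) in SL_2(Z), weight k, index 1 (epsilon = 1).\<close>
definition slash :: "nat \<Rightarrow> (complex \<Rightarrow> complex \<Rightarrow> complex \<Rightarrow> complex)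
    \<Rightarrow> int \<Rightarrow> int \<Rightarrow> int \<Rightarrow> int \<Rightarrow> complex \<Rightarrow> complex \<Rightarrow> complex \<Rightarrow> complex" where
  "slash k \<phi> a b c d \<tau> z w =
     inverse ((of_int c * \<tau> + of_int d) ^ k)
     * eC (- (of_int c * z * w) / (of_int c * \<tau> + of_int d))
     * \<phi> ((of_int a * \<tau> + of_int b) / (of_int c * \<tau> + of_int d))
         (z / (of_int c * \<tau> + of_int d)) (w / (of_int c * \<tau> + of_int d))"

definition fourier_exp ::
    "nat \<Rightarrow> (complex \<Rightarrow> complex \<Rightarrow> complex \<Rightarrow> complex) \<Rightarrow> nat \<Rightarrow> (nat \<Rightarrow> complex \<Rightarrow> complex) \<Rightarrow> bool" where
  "fourier_exp D \<psi> \<nu> cf \<longleftrightarrow> (\<forall>\<tau> z w. Im \<tau> > 0 \<longrightarrow>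
     ((\<lambda>(l, t). cf l t * eC (of_nat l / of_nat \<nu> * \<tau> + cnj t * z + t * w)) has_sum \<psi> \<tau> z w)
       {(l, t). t \<in> Dinv D \<and> real \<nu> * Nm t \<le> real l})"

definition HJac :: "nat \<Rightarrow> nat \<Rightarrow> nat \<Rightarrow> (complex \<Rightarrow> complex \<Rightarrow> complex \<Rightarrow> complex) \<Rightarrow> bool" where
  "HJac D k N \<phi> \<longleftrightarrow>
     holo3 \<phi>
   \<and> (\<forall>\<epsilon> \<in> unitsK D. \<forall>a b c d :: int. a * d - b * c = 1 \<and> int N dvd c \<longrightarrow>
        (\<forall>\<tau> z w. Im \<tau> > 0 \<longrightarrow>
          inverse ((of_int c * \<tau> + of_int d) ^ k)
          * eC (- (of_int c * z * w) / (of_int c * \<tau> + of_int d))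
          * \<phi> ((of_int a * \<tau> + of_int b) / (of_int c * \<tau> + of_int d))
              (\<epsilon> * z / (of_int c * \<tau> + of_int d)) (cnj \<epsilon> * w / (of_int c * \<tau> + of_int d))
          = \<phi> \<tau> z w))
   \<and> (\<forall>lam \<in> OK D. \<forall>\<mu> \<in> OK D. \<forall>\<tau> z w. Im \<tau> > 0 \<longrightarrow>
        eC (of_real (Nm lam) * \<tau> + cnj lam * z + lam * w)
        * \<phi> \<tau> (z + lam * \<tau> + \<mu>) (w + cnj lam * \<tau> + cnj \<mu>) = \<phi> \<tau> z w)
   \<and> (\<forall>a b c d :: int. a * d - b * c = 1 \<longrightarrow>
        (\<exists>\<nu> > 0. (a = 1 \<and> b = 0 \<and> c = 0 \<and> d = 1 \<longrightarrow> \<nu> = 1) \<and>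
           (\<exists>cf. fourier_exp D (slash k \<phi> a b c d) \<nu> cf)))"

definition HJac_spez :: "nat \<Rightarrow> nat \<Rightarrow> nat \<Rightarrow> (complex \<Rightarrow> complex \<Rightarrow> complex \<Rightarrow> complex) \<Rightarrow> bool" where
  "HJac_spez D k N \<phi> \<longleftrightarrow> HJac D k N \<phi> \<and>
     (\<exists>cf. fourier_exp D \<phi> 1 cf \<and>
        (\<forall>l t l' t'. t \<in> Dinv D \<and> Nm t \<le> real l \<and> t' \<in> Dinv D \<and> Nm t' \<le> real l'
            \<and> real l - Nm t = real l' - Nm t' \<longrightarrow> cf l t = cf l' t'))"

end

(*
  A Hermitian Jacobi form is invariant under z \<mapsto> \<epsilon> z for units \<epsilon> and under the translations
  z \<mapsto> z + \<lambda> \<tau> + \<mu> with \<lambda>, \<mu> \<in> O. On the Fourier expansion at the cusp they act by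
  c(l, t) = c(l, \<epsilon>\<^sup>* t) and c(l, t) = c(l + N(t + \<lambda>) - N(t), t + \<lambda>), and both preserve the
  discriminant l - N(t); the coefficients are determined by the function, because on
  \<tau> = x + i, z = s - r \<omega>, w = z\<^sup>* the expansion is an absolutely convergent trigonometric series in
  x, r, s. It remains to see that two t, t' \<in> D\<^sup>-\<^sup>1 with N(t) \<equiv> N(t') mod \<int> satisfy
  t' \<equiv> \<epsilon> t mod O for a unit \<epsilon>. Writing t = (m + n \<omega>) / \<surd>-D_K, the class of N(t) mod \<int> is that of
  a binary quadratic form modulo D_K: for prime D_K \<equiv> 3 mod 4 it is m\<^sup>2, forcing m' \<equiv> \<plusminus>m, and for
  D_K = 4, 8 it reduces to a residue computation mod 4 resp. 8, solved by \<epsilon> = \<plusminus>1, i.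
*)
theory Submission
  imports Defs
begin

section \<open>Arithmetic of the ring of integers\<close>

definition OK_of :: "nat \<Rightarrow> int \<Rightarrow> int \<Rightarrow> complex" where
  "OK_of D p q = of_int p + of_int q * omegaK D"

definition Dinv_of :: "nat \<Rightarrow> int \<Rightarrow> int \<Rightarrow> complex" where
  "Dinv_of D m n = OK_of D m n / sqrtmD D"

lemma mem_OK_iff: "x \<in> OK D \<longleftrightarrow> (\<exists>p q. x = OK_of D p q)"
  by (auto simp: OK_def OK_of_def)

lemma mem_Dinv_iff: "t \<in> Dinv D \<longleftrightarrow> (\<exists>m n. t = Dinv_of D m n)"
  by (auto simp: Dinv_def mem_OK_iff Dinv_of_def)

lemma sqrtmD_nonzero: "D > 0 \<Longrightarrow> sqrtmD D \<noteq> 0"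
  by (simp add: sqrtmD_def)

lemma sqrtmD_times_self: "sqrtmD D * sqrtmD D = - of_nat D"
  by (simp add: sqrtmD_def complex_eq_iff)

lemma sqrtmD_times_self_left: "sqrtmD D * (sqrtmD D * x) = - of_nat D * x"
  by (simp add: sqrtmD_times_self flip: mult.assoc)

lemma cnj_sqrtmD: "cnj (sqrtmD D) = - sqrtmD D"
  by (simp add: sqrtmD_def)

lemma mem_Dinv_iff_OK: "D > 0 \<Longrightarrow> t \<in> Dinv D \<longleftrightarrow> t * sqrtmD D \<in> OK D"
  by (auto simp: Dinv_def sqrtmD_nonzero intro!: exI[of _ "t * sqrtmD D"])

lemma OK_of_add: "OK_of D p q + OK_of D p' q' = OK_of D (p + p') (q + q')"
  by (simp add: OK_of_def algebra_simps)

lemma OK_of_uminus: "- OK_of D p q = OK_of D (- p) (- q)"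
  by (simp add: OK_of_def)

lemma OK_add: "x \<in> OK D \<Longrightarrow> y \<in> OK D \<Longrightarrow> x + y \<in> OK D"
  unfolding mem_OK_iff by (metis OK_of_add)

lemma OK_uminus: "x \<in> OK D \<Longrightarrow> - x \<in> OK D"
  unfolding mem_OK_iff by (metis OK_of_uminus)

lemma omegaK_squared:
  assumes "4 * e = D * (D + 1)"
  shows "omegaK D * omegaK D = - of_nat D * omegaK D - of_nat e"
proof -
  have e: "(of_nat e :: complex) = of_nat D * (of_nat D + 1) / 4"
    using arg_cong[OF assms, of "of_nat :: nat \<Rightarrow> complex"] by (simp add: algebra_simps)
  show ?thesis
    by (simp add: omegaK_def e field_simps sqrtmD_times_self)
qed

lemma OK_of_mult:
  assumes "4 * e = D * (D + 1)"
  shows "OK_of D p q * OK_of D p' q'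
    = OK_of D (p * p' - int e * q * q') (p * q' + q * p' - int D * q * q')"
proof -
  have "OK_of D p q * OK_of D p' q'
      = of_int (p * p') + of_int (p * q' + q * p') * omegaK D + of_int (q * q') * (omegaK D * omegaK D)"
    by (simp add: OK_of_def algebra_simps)
  then show ?thesis
    by (simp add: omegaK_squared[OF assms] OK_of_def algebra_simps)
qed

lemma OK_mult:
  assumes "4 dvd D * (D + 1)" "x \<in> OK D" "y \<in> OK D"
  shows "x * y \<in> OK D"
proof -
  obtain e where "D * (D + 1) = 4 * e" using assms(1) by blast
  then show ?thesis
    using assms(2,3) unfolding mem_OK_iff by (metis OK_of_mult)
qed

lemma sqrtmD_eq_OK_of: "sqrtmD D = OK_of D (int D) 2"
  by (simp add: OK_of_def omegaK_def field_simps)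

lemma sqrtmD_in_OK: "sqrtmD D \<in> OK D"
  unfolding sqrtmD_eq_OK_of mem_OK_iff by blast

lemma zero_in_OK: "0 \<in> OK D"
  unfolding mem_OK_iff by (rule exI[of _ 0], rule exI[of _ 0]) (simp add: OK_of_def)

lemma one_in_OK: "1 \<in> OK D"
  unfolding mem_OK_iff by (rule exI[of _ 1], rule exI[of _ 0]) (simp add: OK_of_def)

lemma Dinv_add_OK:
  assumes "D > 0" "4 dvd D * (D + 1)" "t \<in> Dinv D" "x \<in> OK D"
  shows "t + x \<in> Dinv D"
  using assms by (simp add: mem_Dinv_iff_OK distrib_right OK_add OK_mult sqrtmD_in_OK)

lemma OK_mult_Dinv:
  assumes "D > 0" "4 dvd D * (D + 1)" "x \<in> OK D" "t \<in> Dinv D"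
  shows "x * t \<in> Dinv D"
  using assms OK_mult[of D x "t * sqrtmD D"] by (simp add: mem_Dinv_iff_OK mult.assoc)

lemma Nm_eq_cmod: "Nm a = (cmod a)\<^sup>2"
  by (metis Nm_def complex_norm_square Re_complex_of_real)

lemma of_real_Nm: "complex_of_real (Nm a) = a * cnj a"
  by (simp add: Nm_def complex_eq_iff)

lemma Nm_nonneg: "Nm a \<ge> 0"
  by (simp add: Nm_eq_cmod)

lemma Nm_mult: "Nm (a * b) = Nm a * Nm b"
  by (simp add: Nm_eq_cmod norm_mult power_mult_distrib)

lemma Nm_OK_of:
  assumes "4 * e = D * (D + 1)"
  shows "Nm (OK_of D p q) = of_int (p\<^sup>2 - int D * p * q + int e * q\<^sup>2)"
proof -
  have e: "(of_nat e :: complex) = of_nat D * (of_nat D + 1) / 4"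
    using arg_cong[OF assms, of "of_nat :: nat \<Rightarrow> complex"] by (simp add: algebra_simps)
  have "complex_of_real (Nm (OK_of D p q)) = of_int (p\<^sup>2 - int D * p * q + int e * q\<^sup>2)"
    unfolding of_real_Nm OK_of_def omegaK_def
    by (simp add: cnj_sqrtmD e field_simps sqrtmD_times_self sqrtmD_times_self_left power2_eq_square)
  then show ?thesis
    by (metis of_real_eq_iff of_real_of_int_eq)
qed

lemma Nm_Dinv_of: "D > 0 \<Longrightarrow> Nm (Dinv_of D m n) = Nm (OK_of D m n) / real D"
  by (simp add: Dinv_of_def Nm_eq_cmod norm_divide norm_mult power_divide sqrtmD_def)

lemma Nm_in_Ints_OK: "4 dvd D * (D + 1) \<Longrightarrow> x \<in> OK D \<Longrightarrow> Nm x \<in> \<int>"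
  by (auto simp: mem_OK_iff dvd_def Nm_OK_of)

lemma trace_Dinv_of_OK_of:
  "D > 0 \<Longrightarrow> cnj (Dinv_of D m n) * OK_of D p q + Dinv_of D m n * cnj (OK_of D p q) = of_int (n * p - m * q)"
  using sqrtmD_nonzero[of D]
  by (simp add: Dinv_of_def OK_of_def omegaK_def cnj_sqrtmD field_simps sqrtmD_times_self)

lemma Nm_add_OK_diff_in_Ints:
  assumes "D > 0" "4 dvd D * (D + 1)" "t \<in> Dinv D" "x \<in> OK D"
  shows "Nm (t + x) - Nm t \<in> \<int>"
proof -
  obtain m n p q where t: "t = Dinv_of D m n" and x: "x = OK_of D p q"
    using assms(3,4) by (auto simp: mem_Dinv_iff mem_OK_iff)
  have "complex_of_real (Nm (t + x) - Nm t) = (cnj t * x + t * cnj x) + complex_of_real (Nm x)"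
    by (simp add: of_real_Nm algebra_simps)
  also have "\<dots> = complex_of_real (of_int (n * p - m * q) + Nm x)"
    by (simp add: t x trace_Dinv_of_OK_of[OF assms(1)])
  finally have "Nm (t + x) - Nm t = of_int (n * p - m * q) + Nm x"
    by (simp only: of_real_eq_iff)
  then show ?thesis
    using Nm_in_Ints_OK[OF assms(2,4)] by simp
qed

lemma unitsK_mult_cnj:
  assumes "4 dvd D * (D + 1)" "\<epsilon> \<in> unitsK D"
  shows "\<epsilon> * cnj \<epsilon> = 1"
proof -
  obtain f where \<epsilon>: "\<epsilon> \<in> OK D" and f: "f \<in> OK D" "\<epsilon> * f = 1"
    using assms(2) by (auto simp: unitsK_def)
  obtain a b where a: "Nm \<epsilon> = of_int a" and b: "Nm f = of_int b"
    using Nm_in_Ints_OK[OF assms(1) \<epsilon>] Nm_in_Ints_OK[OF assms(1) f(1)] by (auto elim!: Ints_cases)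
  have "Nm \<epsilon> * Nm f = 1"
    using arg_cong[OF f(2), of Nm] by (simp add: Nm_mult Nm_def[of 1])
  then have "a * b = 1"
    unfolding a b by (metis of_int_eq_1_iff of_int_mult)
  moreover have "a \<ge> 0"
    using Nm_nonneg[of \<epsilon>] a by simp
  ultimately have "a = 1"
    using zmult_eq_1_iff[of a b] by auto
  then show ?thesis
    using a by (simp flip: of_real_Nm)
qed

lemma Nm_unitsK:
  assumes "4 dvd D * (D + 1)" "\<epsilon> \<in> unitsK D"
  shows "Nm \<epsilon> = 1"
  using unitsK_mult_cnj[OF assms] by (simp add: Nm_def)

lemma cnj_unitsK:
  assumes "4 dvd D * (D + 1)" "\<epsilon> \<in> unitsK D"
  shows "cnj \<epsilon> \<in> unitsK D"
proof -
  obtain f where \<epsilon>: "\<epsilon> \<in> OK D" and f: "f \<in> OK D" "\<epsilon> * f = 1"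
    using assms(2) by (auto simp: unitsK_def)
  have "f = cnj \<epsilon>"
    using f(2) unitsK_mult_cnj[OF assms] by (metis mult.left_commute mult_1_right)
  then show ?thesis
    using \<epsilon> f by (auto simp: unitsK_def mult.commute)
qed

lemma minus_one_unitsK: "- 1 \<in> unitsK D"
  using OK_uminus[OF one_in_OK] by (auto simp: unitsK_def intro!: bexI[of _ "- 1"])

lemma one_unitsK: "1 \<in> unitsK D"
  using one_in_OK by (auto simp: unitsK_def)

lemma imag_unit_unitsK: "\<i> \<in> unitsK 4"
proof -
  have "\<i> = OK_of 4 2 1" "- \<i> = OK_of 4 (- 2) (- 1)"
    by (simp_all add: OK_of_def omegaK_def sqrtmD_def complex_eq_iff)
  then have "\<i> \<in> OK 4" "- \<i> \<in> OK 4"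
    by (auto simp: mem_OK_iff)
  then show ?thesis
    by (auto simp: unitsK_def intro!: bexI[of _ "- \<i>"])
qed

section \<open>Norm classes of the inverse different\<close>

lemma Dinv_of_add: "Dinv_of D m n + Dinv_of D m' n' = Dinv_of D (m + m') (n + n')"
  by (simp add: Dinv_of_def OK_of_add [symmetric] add_divide_distrib)

lemma Dinv_of_diff: "Dinv_of D m' n' - Dinv_of D m n = Dinv_of D (m' - m) (n' - n)"
  by (simp add: Dinv_of_def OK_of_def diff_divide_distrib algebra_simps)

lemma Dinv_of_in_OK:
  assumes "D > 0" "4 * e = D * (D + 1)"
    and "a = int D * p - 2 * int e * q" "b = 2 * p - int D * q"
  shows "Dinv_of D a b \<in> OK D"
proof -
  have "OK_of D p q * sqrtmD D = OK_of D a b"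
    unfolding sqrtmD_eq_OK_of assms(3,4) OK_of_mult[OF assms(2)] by (simp add: algebra_simps)
  then have "Dinv_of D a b = OK_of D p q"
    using sqrtmD_nonzero[OF assms(1)] by (simp add: Dinv_of_def field_simps)
  then show ?thesis
    by (auto simp: mem_OK_iff)
qed

lemma norm_form_diff_dvd:
  assumes "D > 0" "4 * e = D * (D + 1)"
    and "Nm (Dinv_of D m' n') - Nm (Dinv_of D m n) \<in> \<int>"
  shows "int D dvd (m'\<^sup>2 - int D * m' * n' + int e * n'\<^sup>2) - (m\<^sup>2 - int D * m * n + int e * n\<^sup>2)"
proof -
  let ?Q = "(m'\<^sup>2 - int D * m' * n' + int e * n'\<^sup>2) - (m\<^sup>2 - int D * m * n + int e * n\<^sup>2)"
  obtain k where "Nm (Dinv_of D m' n') - Nm (Dinv_of D m n) = of_int k"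
    using assms(3) by (auto elim: Ints_cases)
  moreover have "Nm (Dinv_of D m' n') - Nm (Dinv_of D m n) = of_int ?Q / real D"
    by (simp add: Nm_Dinv_of[OF assms(1)] Nm_OK_of[OF assms(2)] diff_divide_distrib)
  ultimately have "real_of_int ?Q = of_int (int D * k)"
    using assms(1) by (simp add: field_simps)
  then show ?thesis
    by (simp only: of_int_eq_iff) simp
qed

lemma Dinv_norm_class_prime:
  assumes "prime D" "D mod 4 = 3"
    and t: "t \<in> Dinv D" and t': "t' \<in> Dinv D" and "Nm t' - Nm t \<in> \<int>"
  shows "t' - t \<in> OK D \<or> t' + t \<in> OK D"
proof -
  have "D > 0"
    using assms(1) by (simp add: prime_gt_0_nat)
  have "4 dvd D + 1"
    using assms(2) by presburger
  then obtain f where f: "D + 1 = 4 * f" ..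
  have e: "4 * (D * f) = D * (D + 1)"
    unfolding f by simp
  have in_OK: "Dinv_of D a b \<in> OK D" if dvd: "int D dvd a" for a b
  proof -
    obtain k where k: "a = int D * k"
      using dvd by blast
    have D_eq: "int D = 4 * int f - 1"
      using f by linarith
    show ?thesis
      by (intro Dinv_of_in_OK[OF \<open>D > 0\<close> e, where p = "k + 2 * int f * (b - 2 * k)" and q = "b - 2 * k"])
        (simp_all add: k D_eq algebra_simps)
  qed
  obtain m n m' n' where tm: "t = Dinv_of D m n" and tm': "t' = Dinv_of D m' n'"
    using t t' by (auto simp: mem_Dinv_iff)
  have "int D dvd (m'\<^sup>2 - int D * m' * n' + int (D * f) * n'\<^sup>2) - (m\<^sup>2 - int D * m * n + int (D * f) * n\<^sup>2)"
    using norm_form_diff_dvd[OF \<open>D > 0\<close> e] assms(5) by (simp add: tm tm')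
  moreover have "(m'\<^sup>2 - int D * m' * n' + int (D * f) * n'\<^sup>2) - (m\<^sup>2 - int D * m * n + int (D * f) * n\<^sup>2)
      = (m' - m) * (m' + m) + int D * (m * n - m' * n' + int f * (n'\<^sup>2 - n\<^sup>2))"
    by (simp add: algebra_simps power2_eq_square)
  ultimately have "int D dvd (m' - m) * (m' + m)"
    by (simp add: dvd_add_left_iff)
  then have "int D dvd m' - m \<or> int D dvd m' + m"
    using assms(1) by (simp add: prime_dvd_mult_iff)
  moreover have "t' - t = Dinv_of D (m' - m) (n' - n)" "t' + t = Dinv_of D (m' + m) (n' + n)"
    by (simp_all add: tm tm' Dinv_of_diff Dinv_of_add)
  ultimately show ?thesis
    using in_OK by auto
qed

lemma double_dvd_square_diff_square_mod:
  fixes x d :: int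
  assumes "even d"
  shows "2 * d dvd x\<^sup>2 - (x mod d)\<^sup>2"
proof -
  obtain e where d: "d = 2 * e"
    using assms by blast
  define q where "q = x div d"
  define r where "r = x mod d"
  have "x = d * q + r"
    by (simp add: q_def r_def)
  then have "x\<^sup>2 - r\<^sup>2 = 2 * d * (q * (e * q + r))"
    by (simp add: d power2_eq_square algebra_simps)
  then show ?thesis
    by (simp add: r_def)
qed

lemma sum_two_squares_mod_4_parity:
  fixes m n m' n' :: int
  assumes "4 dvd (m'\<^sup>2 + n'\<^sup>2) - (m\<^sup>2 + n\<^sup>2)"
  shows "(even (m' - m) \<and> even (n' - n)) \<or> (even (m' - n) \<and> even (n' - m))"
proof -
  have sq: "4 dvd x\<^sup>2 - (x mod 2)\<^sup>2" for x :: int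
    using double_dvd_square_diff_square_mod[of 2 x] by simp
  have "((m' mod 2)\<^sup>2 + (n' mod 2)\<^sup>2) - ((m mod 2)\<^sup>2 + (n mod 2)\<^sup>2)
      = ((m'\<^sup>2 + n'\<^sup>2) - (m\<^sup>2 + n\<^sup>2)) - (m'\<^sup>2 - (m' mod 2)\<^sup>2) - (n'\<^sup>2 - (n' mod 2)\<^sup>2)
        + (m\<^sup>2 - (m mod 2)\<^sup>2) + (n\<^sup>2 - (n mod 2)\<^sup>2)"
    by simp
  also have "4 dvd \<dots>"
    by (rule assms sq dvd_add dvd_diff)+
  finally have residues: "4 dvd ((m' mod 2)\<^sup>2 + (n' mod 2)\<^sup>2) - ((m mod 2)\<^sup>2 + (n mod 2)\<^sup>2)" .
  have residue_cases: "(a' = a \<and> b' = b) \<or> (a' = b \<and> b' = a)"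
    if "a = 0 \<or> a = 1" "b = 0 \<or> b = 1" "a' = 0 \<or> a' = 1" "b' = 0 \<or> b' = 1"
      and "4 dvd (a'\<^sup>2 + b'\<^sup>2) - (a\<^sup>2 + b\<^sup>2)" for a b a' b' :: int
    using that by (elim disjE; simp)
  have mod2: "x mod 2 = 0 \<or> x mod 2 = 1" for x :: int
    by presburger
  have "(m' mod 2 = m mod 2 \<and> n' mod 2 = n mod 2) \<or> (m' mod 2 = n mod 2 \<and> n' mod 2 = m mod 2)"
    by (rule residue_cases[OF mod2 mod2 mod2 mod2 residues])
  then show ?thesis
    by (simp add: mod_eq_dvd_iff)
qed

lemma square_plus_twice_square_mod_8:
  fixes m n m' n' :: int
  assumes "8 dvd (m'\<^sup>2 + 2 * n'\<^sup>2) - (m\<^sup>2 + 2 * n\<^sup>2)"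
  shows "(4 dvd m' - m \<and> even (n' - n)) \<or> (4 dvd m' + m \<and> even (n' + n))"
proof -
  have sq4: "8 dvd x\<^sup>2 - (x mod 4)\<^sup>2" for x :: int
    using double_dvd_square_diff_square_mod[of 4 x] by simp
  have sq2: "8 dvd 2 * x\<^sup>2 - 2 * (x mod 2)\<^sup>2" for x :: int
  proof -
    have "2 * 4 dvd 2 * (x\<^sup>2 - (x mod 2)\<^sup>2)"
      using double_dvd_square_diff_square_mod[of 2 x] by (intro mult_dvd_mono) simp_all
    then show ?thesis
      by (simp add: right_diff_distrib)
  qed
  have "((m' mod 4)\<^sup>2 + 2 * (n' mod 2)\<^sup>2) - ((m mod 4)\<^sup>2 + 2 * (n mod 2)\<^sup>2)
      = ((m'\<^sup>2 + 2 * n'\<^sup>2) - (m\<^sup>2 + 2 * n\<^sup>2)) - (m'\<^sup>2 - (m' mod 4)\<^sup>2)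
        - (2 * n'\<^sup>2 - 2 * (n' mod 2)\<^sup>2) + (m\<^sup>2 - (m mod 4)\<^sup>2) + (2 * n\<^sup>2 - 2 * (n mod 2)\<^sup>2)"
    by simp
  also have "8 dvd \<dots>"
    by (rule assms sq4 sq2 dvd_add dvd_diff)+
  finally have residues: "8 dvd ((m' mod 4)\<^sup>2 + 2 * (n' mod 2)\<^sup>2) - ((m mod 4)\<^sup>2 + 2 * (n mod 2)\<^sup>2)" .
  have residue_cases: "(a' = a \<and> b' = b) \<or> (4 dvd a' + a \<and> b' = b)"
    if "a = 0 \<or> a = 1 \<or> a = 2 \<or> a = 3" "b = 0 \<or> b = 1"
      "a' = 0 \<or> a' = 1 \<or> a' = 2 \<or> a' = 3" "b' = 0 \<or> b' = 1"
      and "8 dvd (a'\<^sup>2 + 2 * b'\<^sup>2) - (a\<^sup>2 + 2 * b\<^sup>2)" for a b a' b' :: int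
    using that by (elim disjE; simp)
  have mod4: "x mod 4 = 0 \<or> x mod 4 = 1 \<or> x mod 4 = 2 \<or> x mod 4 = 3" for x :: int
    by presburger
  have mod2: "x mod 2 = 0 \<or> x mod 2 = 1" for x :: int
    by presburger
  have "(m' mod 4 = m mod 4 \<and> n' mod 2 = n mod 2) \<or> (4 dvd m' mod 4 + m mod 4 \<and> n' mod 2 = n mod 2)"
    by (rule residue_cases[OF mod4 mod2 mod4 mod2 residues])
  moreover have "4 dvd m' + m \<longleftrightarrow> 4 dvd m' mod 4 + m mod 4"
    by (simp add: dvd_eq_mod_eq_0 mod_add_eq)
  moreover have "even (n' + n) \<longleftrightarrow> even (n' - n)"
    by presburger
  ultimately show ?thesis
    by (simp add: mod_eq_dvd_iff)
qed

lemma imag_unit_mult_Dinv_of_4: "\<i> * Dinv_of 4 m n = Dinv_of 4 (2 * m - 5 * n) (m - 2 * n)"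
  by (simp add: Dinv_of_def OK_of_def omegaK_def sqrtmD_def field_simps complex_eq_iff)

lemma Dinv_norm_class_4:
  assumes t: "t \<in> Dinv 4" and t': "t' \<in> Dinv 4" and "Nm t' - Nm t \<in> \<int>"
  shows "t' - t \<in> OK 4 \<or> t' - \<i> * t \<in> OK 4"
proof -
  have in_OK: "Dinv_of 4 a b \<in> OK 4" if a: "even a" and b: "even b" for a b
  proof -
    obtain a1 where "a = 2 * a1"
      using a by (rule evenE)
    moreover obtain b1 where "b = 2 * b1"
      using b by (rule evenE)
    ultimately show ?thesis
      by (intro Dinv_of_in_OK[where e = 5 and p = "5 * b1 - a" and q = "b - a1"]) simp_all
  qed
  obtain m n m' n' where tm: "t = Dinv_of 4 m n" and tm': "t' = Dinv_of 4 m' n'"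
    using t t' by (auto simp: mem_Dinv_iff)
  have "4 dvd (m'\<^sup>2 - 4 * m' * n' + 5 * n'\<^sup>2) - (m\<^sup>2 - 4 * m * n + 5 * n\<^sup>2)"
    using norm_form_diff_dvd[of 4 5] assms(3) by (simp add: tm tm')
  moreover have "(m'\<^sup>2 + n'\<^sup>2) - (m\<^sup>2 + n\<^sup>2)
      = (m'\<^sup>2 - 4 * m' * n' + 5 * n'\<^sup>2) - (m\<^sup>2 - 4 * m * n + 5 * n\<^sup>2) - 4 * (m * n - m' * n' + n'\<^sup>2 - n\<^sup>2)"
    by (simp add: algebra_simps)
  ultimately have "4 dvd (m'\<^sup>2 + n'\<^sup>2) - (m\<^sup>2 + n\<^sup>2)"
    by (metis dvd_diff dvd_triv_left)
  then have "(even (m' - m) \<and> even (n' - n)) \<or> (even (m' - n) \<and> even (n' - m))"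
    by (rule sum_two_squares_mod_4_parity)
  moreover have "even (m' - (2 * m - 5 * n)) \<longleftrightarrow> even (m' - n)" "even (n' - (m - 2 * n)) \<longleftrightarrow> even (n' - m)"
    by presburger+
  moreover have "t' - t = Dinv_of 4 (m' - m) (n' - n)"
    "t' - \<i> * t = Dinv_of 4 (m' - (2 * m - 5 * n)) (n' - (m - 2 * n))"
    by (simp_all add: tm tm' Dinv_of_diff imag_unit_mult_Dinv_of_4)
  ultimately show ?thesis
    using in_OK by auto
qed

lemma Dinv_norm_class_8:
  assumes t: "t \<in> Dinv 8" and t': "t' \<in> Dinv 8" and "Nm t' - Nm t \<in> \<int>"
  shows "t' - t \<in> OK 8 \<or> t' + t \<in> OK 8"
proof -
  have in_OK: "Dinv_of 8 a b \<in> OK 8" if a: "4 dvd a" and b: "even b" for a b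
  proof -
    obtain a1 where "a = 4 * a1"
      using a by (rule dvdE)
    moreover obtain b1 where "b = 2 * b1"
      using b by (rule evenE)
    ultimately show ?thesis
      by (intro Dinv_of_in_OK[where e = 18 and p = "9 * b1 - a" and q = "b - a1"]) simp_all
  qed
  obtain m n m' n' where tm: "t = Dinv_of 8 m n" and tm': "t' = Dinv_of 8 m' n'"
    using t t' by (auto simp: mem_Dinv_iff)
  have "8 dvd (m'\<^sup>2 - 8 * m' * n' + 18 * n'\<^sup>2) - (m\<^sup>2 - 8 * m * n + 18 * n\<^sup>2)"
    using norm_form_diff_dvd[of 8 18] assms(3) by (simp add: tm tm')
  moreover have "(m'\<^sup>2 + 2 * n'\<^sup>2) - (m\<^sup>2 + 2 * n\<^sup>2)
      = (m'\<^sup>2 - 8 * m' * n' + 18 * n'\<^sup>2) - (m\<^sup>2 - 8 * m * n + 18 * n\<^sup>2)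
        - 8 * (m * n - m' * n' + 2 * n'\<^sup>2 - 2 * n\<^sup>2)"
    by (simp add: algebra_simps)
  ultimately have "8 dvd (m'\<^sup>2 + 2 * n'\<^sup>2) - (m\<^sup>2 + 2 * n\<^sup>2)"
    by (metis dvd_diff dvd_triv_left)
  then have "(4 dvd m' - m \<and> even (n' - n)) \<or> (4 dvd m' + m \<and> even (n' + n))"
    by (rule square_plus_twice_square_mod_8)
  moreover have "t' - t = Dinv_of 8 (m' - m) (n' - n)" "t' + t = Dinv_of 8 (m' + m) (n' + n)"
    by (simp_all add: tm tm' Dinv_of_diff Dinv_of_add)
  ultimately show ?thesis
    using in_OK by auto
qed

lemma Dinv_norm_class_orbit:
  assumes "D = 4 \<or> D = 8 \<or> (prime D \<and> D mod 4 = 3)"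
    and "t \<in> Dinv D" "t' \<in> Dinv D" "Nm t' - Nm t \<in> \<int>"
  shows "\<exists>\<epsilon>\<in>unitsK D. t' - \<epsilon> * t \<in> OK D"
proof -
  have "t' - 1 * t \<in> OK D \<or> t' - (- 1) * t \<in> OK D \<or> (D = 4 \<and> t' - \<i> * t \<in> OK D)"
    using assms(1)
  proof (elim disjE conjE)
    assume "D = 4"
    then show ?thesis
      using Dinv_norm_class_4[of t t'] assms(2-4) by auto
  next
    assume "D = 8"
    then show ?thesis
      using Dinv_norm_class_8[of t t'] assms(2-4) by auto
  next
    assume "prime D" "D mod 4 = 3"
    then show ?thesis
      using Dinv_norm_class_prime[OF \<open>prime D\<close> \<open>D mod 4 = 3\<close> assms(2-4)] by auto
  qed
  then show ?thesis
    using one_unitsK minus_one_unitsK imag_unit_unitsK by metis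
qed

section \<open>Uniqueness of trigonometric expansions\<close>

lemma eC_add: "eC (a + b) = eC a * eC b"
  by (simp add: eC_def distrib_left exp_add)

lemma eC_of_int: "eC (of_int k) = 1"
  unfolding eC_def exp_eq_1 by (auto intro!: exI[of _ k])

lemma eC_of_real_eq_1_imp_Ints: "eC (of_real x) = 1 \<Longrightarrow> x \<in> \<int>"
proof -
  assume "eC (of_real x) = 1"
  then obtain n :: int where "2 * pi * x = of_int (2 * n) * pi"
    by (auto simp: eC_def exp_eq_1)
  then show ?thesis by simp
qed

lemma eC_of_nat_mult: "eC (of_nat j * a) = eC a ^ j"
  by (simp add: eC_def exp_of_nat_mult [symmetric] mult_ac)

lemma sum_eC_roots_of_unity:
  assumes "M > 0"
  shows "(\<Sum>j<M. eC (of_int k * of_nat j / of_nat M)) = (if int M dvd k then of_nat M else 0)"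
proof -
  define q where "q = eC (of_int k / of_nat M)"
  have q_pow: "eC (of_int k * of_nat j / of_nat M) = q ^ j" for j
    unfolding q_def eC_of_nat_mult [symmetric] by (simp add: mult_ac)
  show ?thesis
  proof (cases "q = 1")
    case True
    then have "real_of_int k / real M \<in> \<int>"
      by (intro eC_of_real_eq_1_imp_Ints) (simp add: q_def)
    then obtain c where "real_of_int k / real M = of_int c"
      by (auto elim: Ints_cases)
    then have "k = int M * c"
      using assms by (simp add: field_simps) (metis of_int_eq_iff of_int_mult of_int_of_nat_eq)
    then have "(of_int k * of_nat j / of_nat M :: complex) = of_int (c * int j)" for j
      using assms by simp
    then have "(\<Sum>j<M. eC (of_int k * of_nat j / of_nat M)) = (\<Sum>j<M. 1)"
      by (simp only: eC_of_int)
    then show ?thesis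
      using \<open>k = int M * c\<close> by simp
  next
    case False
    have "q ^ M = 1"
      using q_pow[of M] assms by (simp add: eC_of_int)
    then have "(\<Sum>j<M. q ^ j) = 0"
      using geometric_sum[OF False, of M] by simp
    moreover have "\<not> int M dvd k"
    proof
      assume "int M dvd k"
      then obtain c where "k = int M * c" by blast
      then have "q = eC (of_int c)"
        using assms by (simp add: q_def)
      then show False
        using False by (simp add: eC_of_int)
    qed
    ultimately show ?thesis
      by (simp add: q_pow)
  qed
qed

lemma has_sum_sum:
  fixes f :: "'i \<Rightarrow> 'a \<Rightarrow> 'b::topological_comm_monoid_add"
  assumes "finite I" "\<And>i. i \<in> I \<Longrightarrow> (f i has_sum s i) A"
  shows "((\<lambda>x. \<Sum>i\<in>I. f i x) has_sum (\<Sum>i\<in>I. s i)) A"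
  using assms
proof (induction I rule: finite_induct)
  case (insert i I)
  then show ?case
    by (simp add: has_sum_add)
qed simp

text \<open>Average the series at \<open>x = j / M\<close>, \<open>j < M\<close>, against the \<open>M\<close>-th roots of unity.\<close>
lemma has_sum_residue_class_zero:
  fixes g :: "'a \<Rightarrow> complex" and a :: "'a \<Rightarrow> int"
  assumes "M > 0" and zero: "\<And>x. ((\<lambda>p. g p * eC (of_int (a p) * of_real x)) has_sum 0) A"
  shows "((\<lambda>p. if int M dvd a p - c then g p else 0) has_sum 0) A"
proof -
  define u where "u j = eC (- (of_int c * of_nat j / of_nat M))" for j
  have "((\<lambda>p. \<Sum>j<M. u j * (g p * eC (of_int (a p) * of_real (real j / real M)))) has_sum (\<Sum>j<M. u j * 0)) A"
    by (intro has_sum_sum has_sum_cmult_right zero) simp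
  moreover have "(\<Sum>j<M. u j * (g p * eC (of_int (a p) * of_real (real j / real M))))
      = of_nat M * (if int M dvd a p - c then g p else 0)" for p
  proof -
    have "u j * (g p * eC (of_int (a p) * of_real (real j / real M)))
        = g p * eC (of_int (a p - c) * of_nat j / of_nat M)" for j
    proof -
      have "- (of_int c * of_nat j / of_nat M) + of_int (a p) * of_real (real j / real M)
          = (of_int (a p - c) * of_nat j / of_nat M :: complex)"
        using assms(1) by (simp add: field_simps)
      then show ?thesis
        by (simp add: u_def mult.left_commute flip: eC_add)
    qed
    then have "(\<Sum>j<M. u j * (g p * eC (of_int (a p) * of_real (real j / real M))))
        = g p * (\<Sum>j<M. eC (of_int (a p - c) * of_nat j / of_nat M))"
      by (simp only: sum_distrib_left)
    also have "\<dots> = of_nat M * (if int M dvd a p - c then g p else 0)"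
      unfolding sum_eC_roots_of_unity[OF assms(1)] by simp
    finally show ?thesis .
  qed
  ultimately have "((\<lambda>p. of_nat M * (if int M dvd a p - c then g p else 0)) has_sum 0) A"
    by simp
  then show ?thesis
    using assms(1) by (simp add: has_sum_cmult_right_iff)
qed

lemma exists_modulus_dvd_imp_zero:
  fixes S :: "int set"
  assumes "finite S"
  shows "\<exists>M>0. \<forall>k\<in>S. int M dvd k \<longrightarrow> k = 0"
proof (intro exI conjI ballI impI)
  define M where "M = Suc (nat (\<Sum>k\<in>S. \<bar>k\<bar>))"
  show "M > 0" by (simp add: M_def)
  fix k assume "k \<in> S" "int M dvd k"
  have "\<bar>k\<bar> \<le> (\<Sum>k\<in>S. \<bar>k\<bar>)"
    using assms \<open>k \<in> S\<close> by (intro member_le_sum) auto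
  then have "\<bar>k\<bar> < int M"
    by (simp add: M_def)
  then show "k = 0"
    using \<open>int M dvd k\<close> dvd_imp_le_int[of k "int M"] by (cases "k = 0") auto
qed

text \<open>Outside a finite set carrying all but \<open>\<bar>h p0\<bar> / 2\<close> of the total mass, a filtered family
  contributes at most \<open>\<bar>h p0\<bar> / 2\<close>.\<close>
lemma coeff_zero_if_filtered_sums_zero:
  fixes h :: "'a \<Rightarrow> complex"
  assumes summable: "(\<lambda>p. norm (h p)) summable_on A" and "p0 \<in> A"
    and filters: "\<And>F. finite F \<Longrightarrow> F \<subseteq> A \<Longrightarrow> p0 \<in> F \<Longrightarrow>
        \<exists>P. (\<forall>p\<in>F. P p \<longleftrightarrow> p = p0) \<and> ((\<lambda>p. if P p then h p else 0) has_sum 0) A"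
  shows "h p0 = 0"
proof (rule ccontr)
  assume "h p0 \<noteq> 0"
  define \<epsilon> where "\<epsilon> = norm (h p0) / 2"
  have "\<epsilon> > 0" using \<open>h p0 \<noteq> 0\<close> by (simp add: \<epsilon>_def)
  define T where "T = infsum (\<lambda>p. norm (h p)) A"
  have total: "((\<lambda>p. norm (h p)) has_sum T) A"
    using summable by (simp add: T_def)
  obtain F0 where F0: "finite F0" "F0 \<subseteq> A" "dist (\<Sum>p\<in>F0. norm (h p)) T \<le> \<epsilon>"
    using has_sum_finite_approximation[OF total \<open>\<epsilon> > 0\<close>] by blast
  define F where "F = insert p0 F0"
  have F: "finite F" "F \<subseteq> A" "p0 \<in> F"
    using F0 \<open>p0 \<in> A\<close> by (auto simp: F_def)
  have tail: "((\<lambda>p. norm (h p)) has_sum (T - (\<Sum>p\<in>F. norm (h p)))) (A - F)"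
    by (rule has_sum_Diff[OF total has_sum_finite[OF F(1)] F(2)])
  have "(\<Sum>p\<in>F0. norm (h p)) \<le> (\<Sum>p\<in>F. norm (h p))"
    unfolding F_def by (rule sum_mono2) (use F0 in auto)
  then have tail_small: "T - (\<Sum>p\<in>F. norm (h p)) \<le> \<epsilon>"
    using F0(3) by (simp add: dist_real_def abs_le_iff)
  obtain P where PF: "\<forall>p\<in>F. P p \<longleftrightarrow> p = p0"
    and Pzero: "((\<lambda>p. if P p then h p else 0) has_sum 0) A"
    using filters[OF F] by blast
  let ?g = "\<lambda>p. if P p then h p else 0"
  have "(\<Sum>p\<in>F. ?g p) = h p0"
    using PF F by (simp add: sum.If_cases Int_absorb1 flip: sum.remove)
  then have g_tail: "(?g has_sum - h p0) (A - F)"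
    using has_sum_Diff[OF Pzero has_sum_finite[OF F(1)] F(2)] by simp
  have g_summable: "(\<lambda>p. norm (?g p)) summable_on (A - F)"
    by (rule Infinite_Sum.abs_summable_on_comparison_test[where g = h])
      (use has_sum_imp_summable[OF tail] in simp_all)
  have "norm (- h p0) \<le> infsum (\<lambda>p. norm (?g p)) (A - F)"
    by (rule norm_has_sum_bound[OF has_sum_infsum[OF g_summable] g_tail])
  also have "\<dots> \<le> T - (\<Sum>p\<in>F. norm (h p))"
    by (rule has_sum_mono[OF has_sum_infsum[OF g_summable] tail]) simp
  also have "\<dots> \<le> \<epsilon>"
    by (rule tail_small)
  finally show False
    using \<open>h p0 \<noteq> 0\<close> by (simp add: \<epsilon>_def)
qed

lemma trig_series_congruence_class_zero:
  fixes h :: "'a \<Rightarrow> complex" and a b c :: "'a \<Rightarrow> int"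
  assumes "M > 0"
    and zero: "\<And>x y z. ((\<lambda>p. h p * eC (of_int (a p) * of_real x + of_int (b p) * of_real y
        + of_int (c p) * of_real z)) has_sum 0) A"
  shows "((\<lambda>p. if int M dvd c p - \<gamma> \<and> int M dvd b p - \<beta> \<and> int M dvd a p - \<alpha> then h p else 0)
    has_sum 0) A"
proof -
  let ?ka = "\<lambda>p. int M dvd a p - \<alpha>" and ?kb = "\<lambda>p. int M dvd b p - \<beta>"
    and ?kc = "\<lambda>p. int M dvd c p - \<gamma>"
  have step_a: "((\<lambda>p. if ?ka p then h p * eC (of_int (b p) * of_real y + of_int (c p) * of_real z)
      else 0) has_sum 0) A" for y z
  proof (rule has_sum_residue_class_zero[OF \<open>M > 0\<close>])
    fix x
    show "((\<lambda>p. h p * eC (of_int (b p) * of_real y + of_int (c p) * of_real z)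
        * eC (of_int (a p) * of_real x)) has_sum 0) A"
      using zero[of x y z] by (simp add: eC_add mult_ac)
  qed
  have step_b: "((\<lambda>p. if ?kb p then if ?ka p then h p * eC (of_int (c p) * of_real z) else 0
      else 0) has_sum 0) A" for z
  proof (rule has_sum_residue_class_zero[OF \<open>M > 0\<close>])
    fix y
    show "((\<lambda>p. (if ?ka p then h p * eC (of_int (c p) * of_real z) else 0)
        * eC (of_int (b p) * of_real y)) has_sum 0) A"
      using step_a[of y z] by (rule has_sum_cong[THEN iffD1, rotated]) (simp add: eC_add)
  qed
  have "((\<lambda>p. if ?kc p then if ?kb p then if ?ka p then h p else 0 else 0 else 0) has_sum 0) A"
  proof (rule has_sum_residue_class_zero[OF \<open>M > 0\<close>])
    fix z
    show "((\<lambda>p. (if ?kb p then if ?ka p then h p else 0 else 0) * eC (of_int (c p) * of_real z))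
        has_sum 0) A"
      using step_b[of z] by (rule has_sum_cong[THEN iffD1, rotated]) simp
  qed
  then show ?thesis
    by (simp add: if_if_eq_conj)
qed

lemma trig_series_coeff_zero:
  fixes h :: "'a \<Rightarrow> complex" and a b c :: "'a \<Rightarrow> int"
  assumes inj: "inj_on (\<lambda>p. (a p, b p, c p)) A"
    and zero: "\<And>x y z. ((\<lambda>p. h p * eC (of_int (a p) * of_real x + of_int (b p) * of_real y
        + of_int (c p) * of_real z)) has_sum 0) A"
    and "p0 \<in> A"
  shows "h p0 = 0"
proof (rule coeff_zero_if_filtered_sums_zero[OF _ \<open>p0 \<in> A\<close>])
  show "(\<lambda>p. norm (h p)) summable_on A"
    using zero[of 0 0 0] by (simp add: eC_def has_sum_imp_summable flip: summable_on_iff_abs_summable_on_complex)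
next
  fix F assume F: "finite F" "F \<subseteq> A" "p0 \<in> F"
  define S where "S = (\<lambda>p. a p - a p0) ` F \<union> (\<lambda>p. b p - b p0) ` F \<union> (\<lambda>p. c p - c p0) ` F"
  have "finite S"
    using F(1) by (simp add: S_def)
  then obtain M where "M > 0" and M: "\<forall>k\<in>S. int M dvd k \<longrightarrow> k = 0"
    using exists_modulus_dvd_imp_zero by blast
  let ?P = "\<lambda>p. int M dvd c p - c p0 \<and> int M dvd b p - b p0 \<and> int M dvd a p - a p0"
  have "?P p \<longleftrightarrow> p = p0" if "p \<in> F" for p
  proof
    assume "?P p"
    moreover have "a p - a p0 \<in> S" "b p - b p0 \<in> S" "c p - c p0 \<in> S"
      using that by (simp_all add: S_def)
    ultimately have "(a p, b p, c p) = (a p0, b p0, c p0)"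
      using M by auto
    then show "p = p0"
      using inj_onD[OF inj] F that by blast
  qed simp
  moreover have "((\<lambda>p. if ?P p then h p else 0) has_sum 0) A"
    by (rule trig_series_congruence_class_zero[OF \<open>M > 0\<close> zero])
  ultimately show "\<exists>P. (\<forall>p\<in>F. P p \<longleftrightarrow> p = p0) \<and> ((\<lambda>p. if P p then h p else 0) has_sum 0) A"
    by (intro exI[of _ ?P] conjI ballI)
qed

section \<open>Fourier expansions of Jacobi forms\<close>

definition jacobi_index :: "nat \<Rightarrow> (nat \<times> complex) set" where
  "jacobi_index D = {(l, t). t \<in> Dinv D \<and> Nm t \<le> real l}"

definition jacobi_term :: "nat \<times> complex \<Rightarrow> complex \<Rightarrow> complex \<Rightarrow> complex \<Rightarrow> complex" where
  "jacobi_term p \<tau> z w = eC (of_nat (fst p) * \<tau> + cnj (snd p) * z + snd p * w)"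

definition jacobi_expansion ::
    "nat \<Rightarrow> (complex \<Rightarrow> complex \<Rightarrow> complex \<Rightarrow> complex) \<Rightarrow> (nat \<times> complex \<Rightarrow> complex) \<Rightarrow> bool" where
  "jacobi_expansion D \<phi> cf \<longleftrightarrow> (\<forall>\<tau> z w. Im \<tau> > 0 \<longrightarrow>
     ((\<lambda>p. cf p * jacobi_term p \<tau> z w) has_sum \<phi> \<tau> z w) (jacobi_index D))"

lemma fourier_exp_one_iff: "fourier_exp D \<phi> 1 cf \<longleftrightarrow> jacobi_expansion D \<phi> (case_prod cf)"
proof -
  have "{(l, t). t \<in> Dinv D \<and> real 1 * Nm t \<le> real l} = jacobi_index D"
    by (simp add: jacobi_index_def)
  moreover have "(\<lambda>(l, t). cf l t * eC (of_nat l / of_nat 1 * \<tau> + cnj t * z + t * w))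
      = (\<lambda>p. case_prod cf p * jacobi_term p \<tau> z w)" for \<tau> z w
    by (auto simp: jacobi_term_def)
  ultimately show ?thesis
    by (simp add: fourier_exp_def jacobi_expansion_def)
qed

definition Dinv_coords :: "nat \<Rightarrow> complex \<Rightarrow> int \<times> int" where
  "Dinv_coords D t = (SOME c. t = case_prod (Dinv_of D) c)"

lemma Dinv_of_coords:
  assumes "t \<in> Dinv D"
  shows "t = case_prod (Dinv_of D) (Dinv_coords D t)"
proof -
  obtain m n where "t = Dinv_of D m n"
    using assms by (auto simp: mem_Dinv_iff)
  then have "\<exists>c. t = case_prod (Dinv_of D) c"
    by (intro exI[of _ "(m, n)"]) simp
  then show ?thesis
    unfolding Dinv_coords_def by (rule someI_ex)
qed

text \<open>On these points a Jacobi expansion is a trigonometric series in \<open>x, r, s\<close> whose frequencies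
  are the coordinates of the index.\<close>
lemma jacobi_term_test_point:
  fixes x r s :: real
  assumes "D > 0"
  defines "z \<equiv> complex_of_real s - complex_of_real r * omegaK D"
  shows "jacobi_term (l, Dinv_of D m n) (of_real x + \<i>) z (cnj z)
    = exp (- 2 * pi * real l) * eC (of_int (int l) * of_real x + of_int m * of_real r + of_int n * of_real s)"
proof -
  have "cnj (Dinv_of D m n) * z + Dinv_of D m n * cnj z = of_int m * of_real r + of_int n * of_real s"
    using assms(1) sqrtmD_nonzero[OF assms(1)] unfolding z_def
    by (simp add: Dinv_of_def OK_of_def omegaK_def cnj_sqrtmD field_simps sqrtmD_times_self
        sqrtmD_times_self_left)
  then have "of_nat l * (of_real x + \<i>) + cnj (Dinv_of D m n) * z + Dinv_of D m n * cnj z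
      = of_nat l * \<i> + (of_int (int l) * of_real x + of_int m * of_real r + of_int n * of_real s)"
    by (simp add: algebra_simps)
  moreover have "eC (of_nat l * \<i>) = exp (- 2 * pi * real l)"
  proof -
    have "2 * of_real pi * \<i> * (of_nat l * \<i>) = complex_of_real (- 2 * pi * real l)"
      by (simp add: complex_eq_iff)
    then show ?thesis
      by (simp only: eC_def exp_of_real)
  qed
  ultimately show ?thesis
    by (simp add: jacobi_term_def eC_add)
qed

lemma jacobi_coeffs_zero:
  assumes "D > 0" and zero: "jacobi_expansion D (\<lambda>_ _ _. 0) d" and "p \<in> jacobi_index D"
  shows "d p = 0"
proof -
  define m where "m p = fst (Dinv_coords D (snd p))" for p :: "nat \<times> complex"
  define n where "n p = snd (Dinv_coords D (snd p))" for p :: "nat \<times> complex"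
  have p_eq: "q = (fst q, Dinv_of D (m q) (n q))" if "q \<in> jacobi_index D" for q
    using Dinv_of_coords that by (auto simp: jacobi_index_def m_def n_def case_prod_beta)
  have "d p * exp (- 2 * pi * real (fst p)) = 0"
  proof (rule trig_series_coeff_zero[where a = "\<lambda>p. int (fst p)" and b = m and c = n])
    show "inj_on (\<lambda>p. (int (fst p), m p, n p)) (jacobi_index D)"
      by (rule inj_onI) (metis p_eq of_nat_eq_iff prod.inject)
  next
    fix x r s :: real
    let ?z = "complex_of_real s - complex_of_real r * omegaK D"
    show "((\<lambda>p. d p * exp (- 2 * pi * real (fst p)) * eC (of_int (int (fst p)) * of_real x
        + of_int (m p) * of_real r + of_int (n p) * of_real s)) has_sum 0) (jacobi_index D)"
    proof (rule has_sum_cong[THEN iffD1, OF _ zero[unfolded jacobi_expansion_def, rule_format,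
          of "of_real x + \<i>" ?z "cnj ?z"]])
      fix q assume q: "q \<in> jacobi_index D"
      have term_q: "jacobi_term q (of_real x + \<i>) ?z (cnj ?z)
          = jacobi_term (fst q, Dinv_of D (m q) (n q)) (of_real x + \<i>) ?z (cnj ?z)"
        using p_eq[OF q] by (rule arg_cong)
      show "d q * jacobi_term q (of_real x + \<i>) ?z (cnj ?z) = d q * exp (- 2 * pi * real (fst q))
          * eC (of_int (int (fst q)) * of_real x + of_int (m q) * of_real r + of_int (n q) * of_real s)"
        unfolding term_q jacobi_term_test_point[OF assms(1)] by simp
    qed simp
  qed fact
  then show ?thesis
    by simp
qed

lemma jacobi_expansion_unique:
  assumes "D > 0" "jacobi_expansion D \<phi> cf" "jacobi_expansion D \<phi> cf'" "p \<in> jacobi_index D"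
  shows "cf p = cf' p"
proof -
  have "jacobi_expansion D (\<lambda>_ _ _. 0) (\<lambda>p. cf p - cf' p)"
    unfolding jacobi_expansion_def
  proof (intro allI impI)
    fix \<tau> z w :: complex assume "Im \<tau> > 0"
    then have "((\<lambda>p. cf p * jacobi_term p \<tau> z w + - (cf' p * jacobi_term p \<tau> z w))
        has_sum (\<phi> \<tau> z w + - \<phi> \<tau> z w)) (jacobi_index D)"
      using assms(2,3) unfolding jacobi_expansion_def by (intro has_sum_add has_sum_uminusI) auto
    then show "((\<lambda>p. (cf p - cf' p) * jacobi_term p \<tau> z w) has_sum 0) (jacobi_index D)"
      by (simp add: algebra_simps)
  qed
  then show ?thesis
    using jacobi_coeffs_zero[OF assms(1) _ assms(4)] by fastforce
qed

lemma jacobi_coeffs_invariant: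
  assumes "D > 0" and expansion: "jacobi_expansion D \<phi> cf"
    and g: "bij_betw g (jacobi_index D) (jacobi_index D)"
    and reindexed: "\<And>\<tau> z w. Im \<tau> > 0 \<Longrightarrow>
        ((\<lambda>p. cf p * jacobi_term (g p) \<tau> z w) has_sum \<phi> \<tau> z w) (jacobi_index D)"
    and p: "p \<in> jacobi_index D"
  shows "cf (g p) = cf p"
proof -
  let ?g' = "inv_into (jacobi_index D) g"
  have g'g: "?g' (g q) = q" if "q \<in> jacobi_index D" for q
    using g that by (simp add: bij_betw_def)
  have "jacobi_expansion D \<phi> (\<lambda>q. cf (?g' q))"
    unfolding jacobi_expansion_def
  proof (intro allI impI)
    fix \<tau> z w :: complex assume "Im \<tau> > 0"
    have "((\<lambda>q. cf (?g' (g q)) * jacobi_term (g q) \<tau> z w) has_sum \<phi> \<tau> z w) (jacobi_index D)"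
      using reindexed[OF \<open>Im \<tau> > 0\<close>] by (rule has_sum_cong[THEN iffD1, rotated]) (simp add: g'g)
    then show "((\<lambda>q. cf (?g' q) * jacobi_term q \<tau> z w) has_sum \<phi> \<tau> z w) (jacobi_index D)"
      using has_sum_reindex_bij_betw[OF g] by blast
  qed
  then have "cf (?g' (g p)) = cf (g p)"
    using jacobi_expansion_unique[OF assms(1) _ expansion] g p by (simp add: bij_betw_apply)
  then show ?thesis
    using g'g[OF p] by simp
qed

section \<open>Symmetries of the Fourier coefficients\<close>

lemma jacobi_coeffs_unit_invariant:
  assumes D: "D > 0" "4 dvd D * (D + 1)"
    and expansion: "jacobi_expansion D \<phi> cf"
    and \<epsilon>: "\<epsilon> \<in> unitsK D"
    and invariant: "\<And>\<tau> z w. Im \<tau> > 0 \<Longrightarrow> \<phi> \<tau> (\<epsilon> * z) (cnj \<epsilon> * w) = \<phi> \<tau> z w"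
    and p: "(l, t) \<in> jacobi_index D"
  shows "cf (l, cnj \<epsilon> * t) = cf (l, t)"
proof -
  have units: "\<epsilon> \<in> unitsK D" "cnj \<epsilon> \<in> unitsK D"
    using \<epsilon> cnj_unitsK[OF D(2) \<epsilon>] by auto
  have unit_mult_index: "(fst q, u * snd q) \<in> jacobi_index D"
    if "u \<in> unitsK D" "q \<in> jacobi_index D" for u q
    using that OK_mult_Dinv[OF D] Nm_unitsK[OF D(2)]
    by (auto simp: jacobi_index_def unitsK_def Nm_mult)
  define g where "g q = (fst q, cnj \<epsilon> * snd q)" for q :: "nat \<times> complex"
  have "bij_betw g (jacobi_index D) (jacobi_index D)"
  proof (rule bij_betw_byWitness[where f' = "\<lambda>q. (fst q, \<epsilon> * snd q)"])
    show "\<forall>q\<in>jacobi_index D. (fst (g q), \<epsilon> * snd (g q)) = q"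
         "\<forall>q\<in>jacobi_index D. g (fst q, \<epsilon> * snd q) = q"
      using unitsK_mult_cnj[OF D(2) \<epsilon>] by (simp_all add: g_def mult.assoc[symmetric] mult.commute)
    show "g ` jacobi_index D \<subseteq> jacobi_index D" "(\<lambda>q. (fst q, \<epsilon> * snd q)) ` jacobi_index D \<subseteq> jacobi_index D"
      using unit_mult_index units by (auto simp: g_def)
  qed
  moreover have "((\<lambda>q. cf q * jacobi_term (g q) \<tau> z w) has_sum \<phi> \<tau> z w) (jacobi_index D)"
    if "Im \<tau> > 0" for \<tau> z w
  proof -
    have "((\<lambda>q. cf q * jacobi_term q \<tau> (\<epsilon> * z) (cnj \<epsilon> * w)) has_sum \<phi> \<tau> (\<epsilon> * z) (cnj \<epsilon> * w))
        (jacobi_index D)"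
      using expansion that unfolding jacobi_expansion_def by blast
    then show ?thesis
      unfolding invariant[OF that] by (simp add: jacobi_term_def g_def mult_ac)
  qed
  ultimately have "cf (g (l, t)) = cf (l, t)"
    by (rule jacobi_coeffs_invariant[OF D(1) expansion _ _ p])
  then show ?thesis
    by (simp add: g_def)
qed

text \<open>The first component is an integer (\<open>Nm_add_OK_diff_in_Ints\<close>) stored as a natural number.\<close>
definition jacobi_shift :: "complex \<Rightarrow> nat \<times> complex \<Rightarrow> nat \<times> complex" where
  "jacobi_shift x p = (nat \<lfloor>real (fst p) + (Nm (snd p + x) - Nm (snd p))\<rfloor>, snd p + x)"

lemma
  assumes D: "D > 0" "4 dvd D * (D + 1)" and "x \<in> OK D" and p: "p \<in> jacobi_index D"
  shows real_fst_jacobi_shift: "real (fst (jacobi_shift x p)) = real (fst p) + (Nm (snd p + x) - Nm (snd p))"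
    and jacobi_shift_in_index: "jacobi_shift x p \<in> jacobi_index D"
proof -
  have t: "snd p \<in> Dinv D" and l: "Nm (snd p) \<le> real (fst p)"
    using p by (auto simp: jacobi_index_def)
  have "real (fst p) + (Nm (snd p + x) - Nm (snd p)) \<in> \<int>"
    using Nm_add_OK_diff_in_Ints[OF D t \<open>x \<in> OK D\<close>] by (intro Ints_add) auto
  moreover have "real (fst p) + (Nm (snd p + x) - Nm (snd p)) \<ge> 0"
    using l Nm_nonneg[of "snd p + x"] by simp
  ultimately show fst_eq: "real (fst (jacobi_shift x p)) = real (fst p) + (Nm (snd p + x) - Nm (snd p))"
    by (auto simp: jacobi_shift_def elim!: Ints_cases)
  show "jacobi_shift x p \<in> jacobi_index D"
    using Dinv_add_OK[OF D t \<open>x \<in> OK D\<close>] fst_eq l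
    by (auto simp: jacobi_index_def jacobi_shift_def)
qed

lemma jacobi_shift_uminus:
  assumes D: "D > 0" "4 dvd D * (D + 1)" and "x \<in> OK D" and p: "p \<in> jacobi_index D"
  shows "jacobi_shift (- x) (jacobi_shift x p) = p"
proof -
  have "real (fst (jacobi_shift (- x) (jacobi_shift x p))) = real (fst p)"
    using real_fst_jacobi_shift[OF D OK_uminus[OF \<open>x \<in> OK D\<close>] jacobi_shift_in_index[OF assms]]
      real_fst_jacobi_shift[OF assms]
    by (simp add: jacobi_shift_def)
  then show ?thesis
    by (simp add: prod_eq_iff jacobi_shift_def)
qed

lemma bij_betw_jacobi_shift:
  assumes D: "D > 0" "4 dvd D * (D + 1)" and "x \<in> OK D"
  shows "bij_betw (jacobi_shift x) (jacobi_index D) (jacobi_index D)"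
proof (rule bij_betw_byWitness[where f' = "jacobi_shift (- x)"])
  have "- x \<in> OK D"
    using assms(3) by (rule OK_uminus)
  then show "\<forall>p\<in>jacobi_index D. jacobi_shift (- x) (jacobi_shift x p) = p"
    "\<forall>p\<in>jacobi_index D. jacobi_shift x (jacobi_shift (- x) p) = p"
    "jacobi_shift x ` jacobi_index D \<subseteq> jacobi_index D"
    "jacobi_shift (- x) ` jacobi_index D \<subseteq> jacobi_index D"
    using jacobi_shift_uminus[OF D] jacobi_shift_in_index[OF D] assms(3)
    by (auto simp del: minus_minus) (metis minus_minus)
qed

lemma jacobi_coeffs_translation_invariant:
  assumes D: "D > 0" "4 dvd D * (D + 1)"
    and expansion: "jacobi_expansion D \<phi> cf"
    and "x \<in> OK D"
    and invariant: "\<And>\<tau> z w. Im \<tau> > 0 \<Longrightarrow>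
        eC (of_real (Nm x) * \<tau> + cnj x * z + x * w) * \<phi> \<tau> (z + x * \<tau>) (w + cnj x * \<tau>) = \<phi> \<tau> z w"
    and p: "p \<in> jacobi_index D"
  shows "cf (jacobi_shift x p) = cf p"
proof (rule jacobi_coeffs_invariant[OF D(1) expansion bij_betw_jacobi_shift[OF D \<open>x \<in> OK D\<close>] _ p])
  fix \<tau> z w :: complex assume "Im \<tau> > 0"
  let ?c = "eC (of_real (Nm x) * \<tau> + cnj x * z + x * w)"
  have "((\<lambda>q. ?c * (cf q * jacobi_term q \<tau> (z + x * \<tau>) (w + cnj x * \<tau>)))
      has_sum ?c * \<phi> \<tau> (z + x * \<tau>) (w + cnj x * \<tau>)) (jacobi_index D)"
    using expansion \<open>Im \<tau> > 0\<close> unfolding jacobi_expansion_def by (intro has_sum_cmult_right) auto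
  moreover have "?c * jacobi_term q \<tau> (z + x * \<tau>) (w + cnj x * \<tau>) = jacobi_term (jacobi_shift x q) \<tau> z w"
    if "q \<in> jacobi_index D" for q
  proof -
    have "of_nat (fst (jacobi_shift x q)) = of_nat (fst q) + ((snd q + x) * cnj (snd q + x) - snd q * cnj (snd q))"
      using arg_cong[OF real_fst_jacobi_shift[OF D \<open>x \<in> OK D\<close> that], of complex_of_real]
      by (simp add: of_real_Nm)
    then show ?thesis
      unfolding jacobi_term_def eC_add [symmetric] of_real_Nm
      by (intro arg_cong[where f = eC]) (simp add: jacobi_shift_def algebra_simps)
  qed
  ultimately show "((\<lambda>q. cf q * jacobi_term (jacobi_shift x q) \<tau> z w) has_sum \<phi> \<tau> z w) (jacobi_index D)"
    using invariant[OF \<open>Im \<tau> > 0\<close>]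
    by (auto intro: has_sum_cong[THEN iffD1, rotated] simp: mult.left_commute)
qed

lemma jacobi_coeffs_depend_on_discriminant:
  assumes D: "D > 0" "4 dvd D * (D + 1)"
    and expansion: "jacobi_expansion D \<phi> cf"
    and unit_invariant: "\<And>\<epsilon> \<tau> z w. \<epsilon> \<in> unitsK D \<Longrightarrow> Im \<tau> > 0 \<Longrightarrow> \<phi> \<tau> (\<epsilon> * z) (cnj \<epsilon> * w) = \<phi> \<tau> z w"
    and translation_invariant: "\<And>x \<tau> z w. x \<in> OK D \<Longrightarrow> Im \<tau> > 0 \<Longrightarrow>
        eC (of_real (Nm x) * \<tau> + cnj x * z + x * w) * \<phi> \<tau> (z + x * \<tau>) (w + cnj x * \<tau>) = \<phi> \<tau> z w"
    and orbits: "\<And>t t'. t \<in> Dinv D \<Longrightarrow> t' \<in> Dinv D \<Longrightarrow> Nm t' - Nm t \<in> \<int> \<Longrightarrow>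
        \<exists>\<epsilon>\<in>unitsK D. t' - \<epsilon> * t \<in> OK D"
    and p: "(l, t) \<in> jacobi_index D" and p': "(l', t') \<in> jacobi_index D"
    and discriminant: "real l - Nm t = real l' - Nm t'"
  shows "cf (l, t) = cf (l', t')"
proof -
  have "Nm t' - Nm t = of_int (int l' - int l)"
    using discriminant by simp
  then obtain \<epsilon> where \<epsilon>: "\<epsilon> \<in> unitsK D" and x: "t' - \<epsilon> * t \<in> OK D"
    using orbits p p' by (fastforce simp: jacobi_index_def)
  have \<epsilon>': "cnj \<epsilon> \<in> unitsK D"
    using cnj_unitsK[OF D(2) \<epsilon>] .
  have "cf (l, cnj (cnj \<epsilon>) * t) = cf (l, t)"
    by (rule jacobi_coeffs_unit_invariant[OF D expansion \<epsilon>' _ p]) (rule unit_invariant[OF \<epsilon>'])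
  then have rotated: "cf (l, \<epsilon> * t) = cf (l, t)"
    by simp
  have Nm_rotated: "Nm (\<epsilon> * t) = Nm t"
    by (simp add: Nm_mult Nm_unitsK[OF D(2) \<epsilon>])
  have rotated_index: "(l, \<epsilon> * t) \<in> jacobi_index D"
    using p OK_mult_Dinv[OF D] \<epsilon> Nm_rotated by (auto simp: jacobi_index_def unitsK_def)
  have "real (fst (jacobi_shift (t' - \<epsilon> * t) (l, \<epsilon> * t))) = real l'"
    using real_fst_jacobi_shift[OF D x rotated_index] Nm_rotated discriminant by simp
  then have "jacobi_shift (t' - \<epsilon> * t) (l, \<epsilon> * t) = (l', t')"
    by (simp add: jacobi_shift_def)
  then show ?thesis
    using jacobi_coeffs_translation_invariant[OF D expansion x translation_invariant[OF x] rotated_index] rotated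
    by simp
qed

lemma slash_identity: "slash k \<phi> 1 0 0 1 = \<phi>"
  by (intro ext) (simp add: slash_def eC_def)

lemma HJac_fourier_exp:
  assumes "HJac D k N \<phi>"
  obtains cf where "fourier_exp D \<phi> 1 cf"
proof -
  obtain \<nu> cf where "\<nu> > 0" "\<nu> = 1" "fourier_exp D (slash k \<phi> 1 0 0 1) \<nu> cf"
    using assms unfolding HJac_def by (metis mult_1 mult_zero_left diff_zero)
  then show ?thesis
    using that by (simp add: slash_identity)
qed

lemma HJac_unit_invariant:
  assumes "HJac D k N \<phi>" "\<epsilon> \<in> unitsK D" "Im \<tau> > 0"
  shows "\<phi> \<tau> (\<epsilon> * z) (cnj \<epsilon> * w) = \<phi> \<tau> z w"
  using assms(1)[unfolded HJac_def, THEN conjunct2, THEN conjunct1, rule_format, OF assms(2),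
      where a = 1 and b = 0 and c = 0 and d = 1] assms(3)
  by (simp add: eC_def)

lemma HJac_translation_invariant:
  assumes "HJac D k N \<phi>" "x \<in> OK D" "Im \<tau> > 0"
  shows "eC (of_real (Nm x) * \<tau> + cnj x * z + x * w) * \<phi> \<tau> (z + x * \<tau>) (w + cnj x * \<tau>) = \<phi> \<tau> z w"
  using assms(1)[unfolded HJac_def, THEN conjunct2, THEN conjunct2, THEN conjunct1, rule_format,
      OF assms(2) zero_in_OK assms(3)]
  by simp

theorem proposition2p7:
  fixes D k N :: nat
  assumes "D \<in> {3, 4, 7, 8, 11, 19, 43, 67, 163}"
    and "N \<ge> 1" and "k > 0"
    and "card (unitsK D) dvd k"
    and "D = 4 \<or> D = 8 \<or> (prime D \<and> D mod 4 = 3)"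
  shows "{\<phi>. HJac_spez D k N \<phi>} = {\<phi>. HJac D k N \<phi>}"
proof -
  have D: "D > 0" "4 dvd D * (D + 1)"
    using assms(1) by auto
  have "HJac_spez D k N \<phi>" if \<phi>: "HJac D k N \<phi>" for \<phi>
  proof -
    obtain cf where expansion: "fourier_exp D \<phi> 1 cf"
      using HJac_fourier_exp[OF \<phi>] .
    have "cf l t = cf l' t'"
      if "t \<in> Dinv D \<and> Nm t \<le> real l \<and> t' \<in> Dinv D \<and> Nm t' \<le> real l'
        \<and> real l - Nm t = real l' - Nm t'" for l t l' t'
      using jacobi_coeffs_depend_on_discriminant[OF D expansion[unfolded fourier_exp_one_iff]
          HJac_unit_invariant[OF \<phi>] HJac_translation_invariant[OF \<phi>]
          Dinv_norm_class_orbit[OF assms(5)], of l t l' t'] that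
      by (simp add: jacobi_index_def)
    then show ?thesis
      unfolding HJac_spez_def using \<phi> expansion by blast
  qed
  then show ?thesis
    by (auto simp: HJac_spez_def)
qed

end
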